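(* Let $Q_8=\{\pm1,\pm i,\pm j,\pm k\}$ be the quaternion group. The following d-identities form a basis of d-identities of $Q_8$ (i.e. they all hold in $Q_8$, and every group satisfying all of them is isomorphic to a section of $Q_8$): (1) $\omega_8=\bigvee_{0\le i<j\le 8}(x_i=x_j)$; (2) $x^4=1$; (3) $(x_1\in\langle x_2\rangle)\vee(x_2\in\langle x_1\rangle)\vee(x_1^2x_2^2=1)$; (4) $\Big[\bigvee_{i\ne j,\ i,j\in\{1,2,3\}}x_i\in\langle x_j\rangle\Big]\vee(x_1x_2=x_3)\vee(x_1x_2=x_3^{-1})$.
   Context: A d-identity (disjunctive identity) is a universally quantified formula $\forall x_1\dots x_k\,[(f_1=1)\vee\dots\vee(f_n=1)]$ with the $f_i$ words in the free group on the variables; $u=v$ abbreviates $uv^{-1}=1$. A group satisfies it if it is true for all assignments. For a group $G$, $\mathrm{dvar}(G)$ is the class of groups satisfying every d-identity satisfied by $G$; for finite $G$ it is the class of groups isomorphic to sections (quotients of subgroups) of $G$. A set of d-identities is a basis of d-identities of $G$ if all its members hold in $G$ and every group satisfying them lies in $\mathrm{dvar}(G)$. Notation: "$u\in\langle v\rangle$" abbreviates $(u=1)\vee(u=v)\vee(u=v^2)\vee(u=v^3)$. *)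

theory Defs
  imports "HOL-Algebra.Algebra"
begin

text \<open>Elements of Q8 are signed units: (s, u) stands for (-1)^s * u, u in {1, i, j, k}.\<close>

datatype qunit = QE | QI | QJ | QK

fun umul :: "qunit \<Rightarrow> qunit \<Rightarrow> bool \<times> qunit" where
  "umul QE x = (False, x)"
| "umul QI QE = (False, QI)"
| "umul QJ QE = (False, QJ)"
| "umul QK QE = (False, QK)"
| "umul QI QI = (True, QE)"
| "umul QJ QJ = (True, QE)"
| "umul QK QK = (True, QE)"
| "umul QI QJ = (False, QK)"
| "umul QJ QK = (False, QI)"
| "umul QK QI = (False, QJ)"
| "umul QJ QI = (True, QK)"
| "umul QK QJ = (True, QI)"
| "umul QI QK = (True, QJ)"

definition qmul :: "bool \<times> qunit \<Rightarrow> bool \<times> qunit \<Rightarrow> bool \<times> qunit" where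
  "qmul x y = (case umul (snd x) (snd y) of (r, c) \<Rightarrow> (((fst x \<noteq> fst y) \<noteq> r), c))"

definition Q8 :: "(bool \<times> qunit) monoid" where
  "Q8 = \<lparr>carrier = UNIV, monoid.mult = qmul, one = (False, QE)\<rparr>"

definition is_section_of :: "('a, 'c) monoid_scheme \<Rightarrow> ('b, 'd) monoid_scheme \<Rightarrow> bool" where
  "is_section_of H G \<longleftrightarrow>
     (\<exists>K N. subgroup K G \<and> N \<lhd> (G\<lparr>carrier := K\<rparr>) \<and> H \<cong> ((G\<lparr>carrier := K\<rparr>) Mod N))"

text \<open>u \<in> <v> abbreviates (u=1) or (u=v) or (u=v^2) or (u=v^3).\<close>
definition in_cyc :: "('a, 'c) monoid_scheme \<Rightarrow> 'a \<Rightarrow> 'a \<Rightarrow> bool" where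
  "in_cyc G u v \<longleftrightarrow> u = \<one>\<^bsub>G\<^esub> \<or> u = v \<or> u = v [^]\<^bsub>G\<^esub> (2::nat) \<or> u = v [^]\<^bsub>G\<^esub> (3::nat)"

definition sat_omega8 :: "('a, 'c) monoid_scheme \<Rightarrow> bool" where
  "sat_omega8 G \<longleftrightarrow>
     (\<forall>x :: nat \<Rightarrow> 'a. (\<forall>i\<le>8. x i \<in> carrier G) \<longrightarrow> (\<exists>i j. i < j \<and> j \<le> 8 \<and> x i = x j))"

definition sat_exp4 :: "('a, 'c) monoid_scheme \<Rightarrow> bool" where
  "sat_exp4 G \<longleftrightarrow> (\<forall>x\<in>carrier G. x [^]\<^bsub>G\<^esub> (4::nat) = \<one>\<^bsub>G\<^esub>)"

definition sat_id3 :: "('a, 'c) monoid_scheme \<Rightarrow> bool" where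
  "sat_id3 G \<longleftrightarrow> (\<forall>x1\<in>carrier G. \<forall>x2\<in>carrier G.
     in_cyc G x1 x2 \<or> in_cyc G x2 x1 \<or>
     (x1 [^]\<^bsub>G\<^esub> (2::nat)) \<otimes>\<^bsub>G\<^esub> (x2 [^]\<^bsub>G\<^esub> (2::nat)) = \<one>\<^bsub>G\<^esub>)"

definition sat_id4 :: "('a, 'c) monoid_scheme \<Rightarrow> bool" where
  "sat_id4 G \<longleftrightarrow> (\<forall>x1\<in>carrier G. \<forall>x2\<in>carrier G. \<forall>x3\<in>carrier G.
     in_cyc G x1 x2 \<or> in_cyc G x1 x3 \<or> in_cyc G x2 x1 \<or>
     in_cyc G x2 x3 \<or> in_cyc G x3 x1 \<or> in_cyc G x3 x2 \<or>
     x1 \<otimes>\<^bsub>G\<^esub> x2 = x3 \<or> x1 \<otimes>\<^bsub>G\<^esub> x2 = inv\<^bsub>G\<^esub> x3)"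

end

theory Submission
  imports Defs
begin

(* Q8 satisfies the identities by direct computation. Conversely, let G satisfy them, so G has
   exponent 4 and "x in <y>" means that x lies in the cyclic subgroup generated by y. If any two
   elements are comparable under this relation, G is cyclic, hence a quotient of <i> = C4.
   Otherwise take incomparable a, b; by (3) a^2 = b^2. If a^2 = 1, two distinct involutions force
   exponent 2, and (4) applied to a, b and any further element x gives x = ab, so G is the Klein
   group Q8/{1,-1}. If a^2 <> 1, (4) applied to a, b and a^-1 b yields b a = a^-1 b, so i |-> a,
   j |-> b extends to a homomorphism Q8 -> G; it is injective, and onto by (1), which bounds |G|
   by 8. *)

lemma (in monoid) nat_pow_two: "x \<in> carrier G \<Longrightarrow> x [^] (2::nat) = x \<otimes> x"
  by (simp add: numeral_2_eq_2)

lemma (in monoid) nat_pow_four: "x \<in> carrier G \<Longrightarrow> x [^] (4::nat) = x \<otimes> (x \<otimes> (x \<otimes> x))"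
  by (simp add: eval_nat_numeral m_assoc)

lemma (in monoid) in_cyc_iff:
  "v \<in> carrier G \<Longrightarrow> in_cyc G u v \<longleftrightarrow> u = \<one> \<or> u = v \<or> u = v \<otimes> v \<or> u = v \<otimes> (v \<otimes> v)"
  by (simp add: in_cyc_def numeral_3_eq_3 nat_pow_two m_assoc)

lemma (in monoid) fourth_power_cancel:
  assumes "x \<otimes> (x \<otimes> (x \<otimes> x)) = \<one>" "x \<in> carrier G" "y \<in> carrier G"
  shows "x \<otimes> (x \<otimes> (x \<otimes> (x \<otimes> y))) = y"
  using assms by (metis m_assoc m_closed l_one)

lemma UNIV_Q8:
  "(UNIV :: (bool \<times> qunit) set) =
     {(False,QE),(False,QI),(False,QJ),(False,QK),(True,QE),(True,QI),(True,QJ),(True,QK)}"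
  using qunit.exhaust by auto

lemma Q8_simps [simp]: "carrier Q8 = UNIV" "monoid.mult Q8 = qmul" "one Q8 = (False,QE)"
  by (simp_all add: Q8_def)

lemma card_Q8: "card (carrier Q8) = 8"
  by (simp add: UNIV_Q8)

lemma qmul_assoc: "qmul (qmul x y) z = qmul x (qmul y z)"
  by (cases x; cases y; cases z)
     (rename_tac s1 u1 s2 u2 s3 u3, case_tac u1; case_tac u2; case_tac u3; auto simp add: qmul_def)

lemma group_Q8: "group Q8"
proof (rule groupI)
  fix x :: "bool \<times> qunit"
  obtain s u where x: "x = (s, u)" by fastforce
  show "\<exists>y\<in>carrier Q8. y \<otimes>\<^bsub>Q8\<^esub> x = \<one>\<^bsub>Q8\<^esub>"
    by (rule bexI[of _ "if u = QE then (s, QE) else (\<not> s, u)"]) (cases u; simp add: x qmul_def)+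
qed (simp_all add: qmul_assoc, simp add: qmul_def split: prod.split)

interpretation Q8: group Q8
  by (rule group_Q8)

lemma inv_Q8: "inv\<^bsub>Q8\<^esub> (s, u) = (if u = QE then (s, QE) else (\<not> s, u))"
  by (rule Q8.inv_equality) (cases u; simp add: qmul_def)+

lemma sat_omega8_iff: "sat_omega8 G \<longleftrightarrow> finite (carrier G) \<and> card (carrier G) \<le> 8"
proof
  assume omega8: "sat_omega8 G"
  have "card S \<le> 8" if "S \<subseteq> carrier G" "finite S" for S
  proof (rule ccontr)
    assume "\<not> card S \<le> 8"
    then obtain T where T: "T \<subseteq> S" "card T = 9" "finite T"
      by (metis obtain_subset_with_card_n not_less_eq_eq numeral_eq_Suc pred_numeral_simps(3))
    then obtain x where x: "bij_betw x {0..<9::nat} T"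
      using ex_bij_betw_nat_finite by metis
    have "x ` {..8} \<subseteq> carrier G"
      using x T \<open>S \<subseteq> carrier G\<close>
      by (auto simp: bij_betw_def atLeast0LessThan lessThan_Suc_atMost[symmetric])
    then obtain i j where "i < j" "j \<le> 8" "x i = x j"
      using omega8 unfolding sat_omega8_def by blast
    moreover have "inj_on x {..8}"
      using x by (simp add: bij_betw_def atLeast0LessThan lessThan_Suc_atMost[symmetric])
    ultimately show False
      by (auto dest: inj_onD)
  qed
  then show "finite (carrier G) \<and> card (carrier G) \<le> 8"
    by (rule finite_if_finite_subsets_card_bdd)
next
  assume bounded: "finite (carrier G) \<and> card (carrier G) \<le> 8"
  show "sat_omega8 G"
    unfolding sat_omega8_def
  proof (intro allI impI)
    fix x :: "nat \<Rightarrow> _"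
    assume "\<forall>i\<le>8. x i \<in> carrier G"
    then have "card (x ` {..8}) \<le> card (carrier G)"
      using bounded by (intro card_mono) auto
    then have "\<not> inj_on x {..8}"
      using bounded by (auto dest: card_image)
    then obtain i j where "i \<le> 8" "j \<le> 8" "i \<noteq> j" "x i = x j"
      by (auto simp: inj_on_def)
    then show "\<exists>i j. i < j \<and> j \<le> 8 \<and> x i = x j"
      by (metis linorder_neq_iff)
  qed
qed

lemma sat_omega8_Q8: "sat_omega8 Q8"
  by (simp add: sat_omega8_iff card_Q8 UNIV_Q8)

lemma sat_exp4_Q8: "sat_exp4 Q8"
  unfolding sat_exp4_def by (simp add: Q8.nat_pow_four UNIV_Q8 qmul_def)

lemma sat_id3_Q8: "sat_id3 Q8"
  unfolding sat_id3_def by (simp add: Q8.in_cyc_iff Q8.nat_pow_two UNIV_Q8 qmul_def)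

lemma sat_id4_Q8: "sat_id4 Q8"
  unfolding sat_id4_def by (simp add: Q8.in_cyc_iff UNIV_Q8 qmul_def inv_Q8)

lemma is_section_of_if_surj_hom_subgroup:
  assumes "group H" "group G" "subgroup K H"
    and f: "f \<in> hom (H\<lparr>carrier := K\<rparr>) G" and surj: "f ` K = carrier G"
  shows "is_section_of G H"
proof -
  let ?K = "H\<lparr>carrier := K\<rparr>"
  interpret f: group_hom ?K G f
    using assms subgroup.subgroup_is_group by (simp add: group_hom_def group_hom_axioms_def)
  have "?K Mod kernel ?K G f \<cong> G"
    using f.FactGroup_iso surj by simp
  then have "G \<cong> ?K Mod kernel ?K G f"
    using group.iso_sym[OF normal.factorgroup_is_group[OF f.normal_kernel]] by blast
  then show ?thesis
    unfolding is_section_of_def using assms(3) f.normal_kernel by blast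
qed

lemma is_section_of_if_surj_hom:
  assumes "group H" "group G" "f \<in> hom H G" "f ` carrier H = carrier G"
  shows "is_section_of G H"
  using is_section_of_if_surj_hom_subgroup[of H G "carrier H" f] assms group.subgroup_self
  by fastforce

lemma (in group) comm_if_sq_eq_one:
  assumes "\<And>x. x \<in> carrier G \<Longrightarrow> x \<otimes> x = \<one>" "x \<in> carrier G" "y \<in> carrier G"
  shows "x \<otimes> y = y \<otimes> x"
  using assms by (metis inv_equality m_closed inv_mult_group)

definition Q8_C4 :: "(bool \<times> qunit) set" where
  "Q8_C4 = {(False, QE), (False, QI), (True, QE), (True, QI)}"

lemma subgroup_Q8_C4: "subgroup Q8_C4 Q8"
  by (rule Q8.subgroupI) (auto simp: Q8_C4_def inv_Q8 qmul_def)

definition Q8_lift :: "('a, 'c) monoid_scheme \<Rightarrow> 'a \<Rightarrow> 'a \<Rightarrow> bool \<times> qunit \<Rightarrow> 'a" where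
  "Q8_lift G a b x = (if fst x then a \<otimes>\<^bsub>G\<^esub> a else \<one>\<^bsub>G\<^esub>) \<otimes>\<^bsub>G\<^esub>
     (case snd x of QE \<Rightarrow> \<one>\<^bsub>G\<^esub> | QI \<Rightarrow> a | QJ \<Rightarrow> b | QK \<Rightarrow> a \<otimes>\<^bsub>G\<^esub> b)"

lemma (in group) Q8_lift_closed:
  "a \<in> carrier G \<Longrightarrow> b \<in> carrier G \<Longrightarrow> Q8_lift G a b x \<in> carrier G"
  by (simp add: Q8_lift_def split: qunit.split)

lemma (in group) Q8_lift_hom_C4:
  assumes a: "a \<in> carrier G" and a4: "a \<otimes> (a \<otimes> (a \<otimes> a)) = \<one>"
  shows "Q8_lift G a \<one> \<in> hom (Q8\<lparr>carrier := Q8_C4\<rparr>) G"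
proof -
  have "Q8_lift G a \<one> (qmul x y) = Q8_lift G a \<one> x \<otimes> Q8_lift G a \<one> y"
    if "x \<in> Q8_C4" "y \<in> Q8_C4" for x y
    using that a
    by (cases x; cases y)
       (auto simp: Q8_C4_def Q8_lift_def qmul_def m_assoc a4 fourth_power_cancel[OF a4 a])
  then show ?thesis
    using a by (auto intro!: homI Q8_lift_closed)
qed

lemma (in group) Q8_lift_hom:
  assumes a: "a \<in> carrier G" and b: "b \<in> carrier G"
    and a4: "a \<otimes> (a \<otimes> (a \<otimes> a)) = \<one>" and bb: "b \<otimes> b = a \<otimes> a"
    and ba: "b \<otimes> a = inv a \<otimes> b"
  shows "Q8_lift G a b \<in> hom Q8 G"
proof -
  have ba_normal: "b \<otimes> a = a \<otimes> (a \<otimes> (a \<otimes> b))"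
    using ba a b a4 by (metis inv_equality m_assoc m_closed)
  have bb': "b \<otimes> (b \<otimes> y) = a \<otimes> (a \<otimes> y)" if "y \<in> carrier G" for y
    using bb a b that by (metis m_assoc)
  have ba': "b \<otimes> (a \<otimes> y) = a \<otimes> (a \<otimes> (a \<otimes> (b \<otimes> y)))" if "y \<in> carrier G" for y
    using ba_normal a b that by (metis m_assoc m_closed)
  have "Q8_lift G a b (qmul x y) = Q8_lift G a b x \<otimes> Q8_lift G a b y" for x y
    using a b
    by (cases x; cases y) (rename_tac s u t v, case_tac u; case_tac v;
        simp add: Q8_lift_def qmul_def m_assoc a4 fourth_power_cancel[OF a4 a] bb bb' ba_normal ba')
  then show ?thesis
    using a b by (auto intro!: homI Q8_lift_closed)
qed

locale q8_identities = group G for G (structure) +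
  assumes omega8: "sat_omega8 G" and exp4: "sat_exp4 G" and id3: "sat_id3 G" and id4: "sat_id4 G"
begin

lemma fourth_power_eq_one: "x \<in> carrier G \<Longrightarrow> x \<otimes> (x \<otimes> (x \<otimes> x)) = \<one>"
  using exp4 by (simp add: sat_exp4_def nat_pow_four)

lemma fourth_power_cancel_left:
  "x \<in> carrier G \<Longrightarrow> y \<in> carrier G \<Longrightarrow> x \<otimes> (x \<otimes> (x \<otimes> (x \<otimes> y))) = y"
  by (simp add: fourth_power_cancel fourth_power_eq_one)

lemma inv_eq_cube: "x \<in> carrier G \<Longrightarrow> inv x = x \<otimes> (x \<otimes> x)"
  using fourth_power_eq_one by (metis inv_equality m_assoc m_closed)

lemma in_cyc_refl: "v \<in> carrier G \<Longrightarrow> in_cyc G v v"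
  by (simp add: in_cyc_iff)

lemma in_cyc_mult:
  assumes "in_cyc G x v" "in_cyc G y v" "v \<in> carrier G"
  shows "in_cyc G (x \<otimes> y) v"
  using assms by (auto simp: in_cyc_iff m_assoc fourth_power_eq_one fourth_power_cancel_left)

lemma in_cyc_inv:
  assumes "in_cyc G x v" "v \<in> carrier G"
  shows "in_cyc G (inv x) v"
  using assms
  by (auto simp: in_cyc_iff inv_eq_cube m_assoc fourth_power_eq_one fourth_power_cancel_left)

lemma sq_eq_sq_if_incomparable:
  assumes "x \<in> carrier G" "y \<in> carrier G" "\<not> in_cyc G x y" "\<not> in_cyc G y x"
  shows "x \<otimes> x = y \<otimes> y"
proof -
  have "x [^] (2::nat) \<otimes> y [^] (2::nat) = \<one>"
    using id3 assms unfolding sat_id3_def by blast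
  then have "x \<otimes> x \<otimes> (y \<otimes> y) = \<one>"
    using assms by (simp add: nat_pow_two)
  then have "x \<otimes> x = inv (y \<otimes> y)"
    using assms by (metis inv_equality inv_comm m_closed inv_inv)
  then show ?thesis
    using assms by (simp add: inv_eq_cube m_assoc fourth_power_cancel_left)
qed

lemma in_cyc_cases:
  assumes "in_cyc G x y" "x \<in> carrier G" "y \<in> carrier G"
  shows "in_cyc G y x \<or> x = \<one> \<or> x = y \<otimes> y"
  using assms by (auto simp: in_cyc_iff m_assoc fourth_power_cancel_left)

lemma in_cyc_sym:
  assumes "in_cyc G x y" "x \<otimes> x \<noteq> \<one>" "x \<in> carrier G" "y \<in> carrier G"
  shows "in_cyc G y x"
  using in_cyc_cases[OF assms(1,3,4)] assms(2-4) by (auto simp: m_assoc fourth_power_eq_one)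

lemma cyclic_if_in_cyc_total:
  assumes total: "\<And>x y. x \<in> carrier G \<Longrightarrow> y \<in> carrier G \<Longrightarrow> in_cyc G x y \<or> in_cyc G y x"
  shows "\<exists>g\<in>carrier G. \<forall>x\<in>carrier G. in_cyc G x g"
proof (cases "\<exists>g\<in>carrier G. g \<otimes> g \<noteq> \<one>")
  case True
  then obtain g where "g \<in> carrier G" "g \<otimes> g \<noteq> \<one>"
    by blast
  then have "in_cyc G x g" if "x \<in> carrier G" for x
    using total[OF that] in_cyc_sym that by blast
  then show ?thesis
    using \<open>g \<in> carrier G\<close> by blast
next
  case False
  then have sq: "x \<otimes> x = \<one>" if "x \<in> carrier G" for x
    using that by blast
  show ?thesis
  proof (cases "\<exists>g\<in>carrier G. g \<noteq> \<one>")
    case True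
    then obtain g where "g \<in> carrier G" "g \<noteq> \<one>"
      by blast
    then have "in_cyc G x g" if "x \<in> carrier G" for x
      using total[OF that] in_cyc_cases[of g x] sq that by blast
    then show ?thesis
      using \<open>g \<in> carrier G\<close> by blast
  next
    case False
    then show ?thesis
      by (auto simp: in_cyc_iff)
  qed
qed

text \<open>Hence two distinct involutions force exponent 2.\<close>
lemma involution_eq_sq:
  assumes "x \<in> carrier G" "y \<in> carrier G" "x \<otimes> x \<noteq> \<one>" "y \<otimes> y = \<one>" "y \<noteq> \<one>"
  shows "y = x \<otimes> x"
proof -
  have "\<not> in_cyc G x y"
    using assms by (auto simp: in_cyc_iff m_assoc)
  then have "in_cyc G y x"
    using sq_eq_sq_if_incomparable assms by metis
  then show ?thesis
    using in_cyc_cases[OF _ assms(2,1)] \<open>\<not> in_cyc G x y\<close> assms(5) by blast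
qed

lemma Klein_carrier:
  assumes ab: "a \<in> carrier G" "b \<in> carrier G" "\<not> in_cyc G a b" "\<not> in_cyc G b a"
    and aa: "a \<otimes> a = \<one>"
  shows "carrier G = {\<one>, a, b, a \<otimes> b}" and "\<And>x. x \<in> carrier G \<Longrightarrow> x \<otimes> x = \<one>"
proof -
  have bb: "b \<otimes> b = \<one>"
    using sq_eq_sq_if_incomparable[OF ab] aa by simp
  have distinct: "a \<noteq> \<one>" "b \<noteq> \<one>" "a \<noteq> b"
    using ab by (auto simp: in_cyc_iff)
  show sq: "x \<otimes> x = \<one>" if "x \<in> carrier G" for x
    using involution_eq_sq[OF that ab(1) _ aa] involution_eq_sq[OF that ab(2) _ bb] distinct by metis
  then have in_cyc_exp2: "in_cyc G x y \<longleftrightarrow> x = \<one> \<or> x = y" if "y \<in> carrier G" for x y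
    using that by (auto simp: in_cyc_iff m_assoc[symmetric])
  show "carrier G = {\<one>, a, b, a \<otimes> b}"
  proof (rule ccontr)
    assume "carrier G \<noteq> {\<one>, a, b, a \<otimes> b}"
    then obtain x where x: "x \<in> carrier G" "x \<notin> {\<one>, a, b, a \<otimes> b}"
      using ab by blast
    then have "\<not> in_cyc G a x" "\<not> in_cyc G x a" "\<not> in_cyc G b x" "\<not> in_cyc G x b"
      using ab distinct by (auto simp: in_cyc_exp2)
    then have "a \<otimes> b = x \<or> a \<otimes> b = inv x"
      using id4 ab x(1) unfolding sat_id4_def by blast
    moreover have "inv x = x"
      using x sq by (simp add: inv_equality)
    ultimately show False
      using x by simp
  qed
qed

lemma Q8_relation:
  assumes ab: "a \<in> carrier G" "b \<in> carrier G" "\<not> in_cyc G a b" "\<not> in_cyc G b a"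
    and aa: "a \<otimes> a \<noteq> \<one>"
  shows "b \<otimes> a = inv a \<otimes> b"
proof -
  define d where "d = inv a \<otimes> b"
  have d: "d \<in> carrier G"
    using ab by (simp add: d_def)
  have bb: "b \<otimes> b = a \<otimes> a"
    using sq_eq_sq_if_incomparable[OF ab] by simp
  have "\<not> in_cyc G d a"
  proof
    assume "in_cyc G d a"
    then have "in_cyc G (a \<otimes> d) a"
      using ab by (simp add: in_cyc_mult in_cyc_refl)
    then show False
      using ab by (simp add: d_def m_assoc[symmetric])
  qed
  moreover have "\<not> in_cyc G d b"
  proof
    assume "in_cyc G d b"
    then have "in_cyc G (b \<otimes> inv d) b"
      using ab by (simp add: in_cyc_mult in_cyc_inv in_cyc_refl)
    then show False
      using ab by (simp add: d_def inv_mult_group m_assoc[symmetric])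
  qed
  moreover have "\<not> in_cyc G a d" "\<not> in_cyc G b d"
    using calculation in_cyc_sym ab d aa bb by metis+
  ultimately have "a \<otimes> b = d \<or> a \<otimes> b = inv d"
    using id4 ab d unfolding sat_id4_def by blast
  moreover have "a \<otimes> b \<noteq> d"
    using ab aa by (simp add: d_def) (metis r_inv)
  ultimately have "a \<otimes> b = inv b \<otimes> a"
    using ab by (simp add: d_def inv_mult_group)
  then have "b \<otimes> a = a \<otimes> inv b"
    using ab by (metis inv_solve_left inv_solve_right m_assoc m_closed inv_closed)
  also have "\<dots> = a \<otimes> (a \<otimes> (a \<otimes> b))"
    using ab bb by (metis inv_eq_cube m_assoc)
  also have "\<dots> = inv a \<otimes> b"
    using ab by (simp add: inv_eq_cube m_assoc)
  finally show ?thesis .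
qed

lemma is_section_of_Q8_if_cyclic:
  assumes g: "g \<in> carrier G" and cyclic: "\<forall>x\<in>carrier G. in_cyc G x g"
  shows "is_section_of G Q8"
proof -
  have "carrier G = {\<one>, g, g \<otimes> g, g \<otimes> (g \<otimes> g)}"
    using cyclic g by (auto simp: in_cyc_iff)
  also have "\<dots> = Q8_lift G g \<one> ` Q8_C4"
    using g by (simp add: Q8_C4_def Q8_lift_def m_assoc insert_commute)
  finally show ?thesis
    using is_section_of_if_surj_hom_subgroup[OF group_Q8 is_group subgroup_Q8_C4
        Q8_lift_hom_C4[OF g fourth_power_eq_one[OF g]]] by simp
qed

lemma is_section_of_Q8_if_Klein:
  assumes ab: "a \<in> carrier G" "b \<in> carrier G" "\<not> in_cyc G a b" "\<not> in_cyc G b a"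
    and aa: "a \<otimes> a = \<one>"
  shows "is_section_of G Q8"
proof -
  have "b \<otimes> a = inv a \<otimes> b"
    using comm_if_sq_eq_one[OF Klein_carrier(2)[OF ab aa]] ab aa by (simp add: inv_equality)
  with ab have hom: "Q8_lift G a b \<in> hom Q8 G"
    by (intro Q8_lift_hom fourth_power_eq_one sq_eq_sq_if_incomparable)
  have "Q8_lift G a b ` {(False, QE), (False, QI), (False, QJ), (False, QK)} = {\<one>, a, b, a \<otimes> b}"
    using ab(1,2) by (simp add: Q8_lift_def)
  then have "carrier G \<subseteq> Q8_lift G a b ` carrier Q8"
    using Klein_carrier(1)[OF ab aa] by (metis Q8_simps(1) image_mono subset_UNIV)
  then have "Q8_lift G a b ` carrier Q8 = carrier G"
    using ab Q8_lift_closed by blast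
  then show ?thesis
    using is_section_of_if_surj_hom group_Q8 is_group hom by blast
qed

lemma is_section_of_Q8_if_order_four:
  assumes ab: "a \<in> carrier G" "b \<in> carrier G" "\<not> in_cyc G a b" "\<not> in_cyc G b a"
    and aa: "a \<otimes> a \<noteq> \<one>"
  shows "is_section_of G Q8"
proof -
  have hom: "Q8_lift G a b \<in> hom Q8 G"
    using ab Q8_relation[OF ab aa] by (intro Q8_lift_hom fourth_power_eq_one sq_eq_sq_if_incomparable)
  have "w \<otimes> b \<noteq> \<one>" if "in_cyc G w a" "w \<in> carrier G" for w
  proof
    assume "w \<otimes> b = \<one>"
    then have "b = inv w"
      using ab that by (metis inv_comm inv_equality)
    then show False
      using in_cyc_inv[OF that(1) ab(1)] ab(4) by simp
  qed
  from this[of \<one>] this[of a] this[of "a \<otimes> a"] this[of "a \<otimes> (a \<otimes> a)"]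
  have "b \<noteq> \<one>" "a \<otimes> b \<noteq> \<one>" "a \<otimes> (a \<otimes> b) \<noteq> \<one>" "a \<otimes> (a \<otimes> (a \<otimes> b)) \<noteq> \<one>"
    using ab by (simp_all add: in_cyc_iff m_assoc)
  moreover have "a \<noteq> \<one>" "a \<otimes> (a \<otimes> a) \<noteq> \<one>"
    using ab aa fourth_power_eq_one[OF ab(1)] by auto
  ultimately have "Q8_lift G a b x = \<one> \<Longrightarrow> x = (False, QE)" for x
    using ab aa
    by (cases x, rename_tac s u, case_tac s; case_tac u) (simp_all add: Q8_lift_def m_assoc)
  then have "inj (Q8_lift G a b)"
    using inj_on_one_iff'[OF hom group_Q8 is_group] by simp
  then have "card (Q8_lift G a b ` carrier Q8) = 8"
    using card_Q8 by (simp add: card_image)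
  moreover have "finite (carrier G)" "card (carrier G) \<le> 8"
    using omega8 by (simp_all add: sat_omega8_iff)
  ultimately have "Q8_lift G a b ` carrier Q8 = carrier G"
    using ab Q8_lift_closed by (intro card_seteq) auto
  then show ?thesis
    using is_section_of_if_surj_hom group_Q8 is_group hom by blast
qed

lemma is_section_of_Q8: "is_section_of G Q8"
proof (cases "\<forall>x\<in>carrier G. \<forall>y\<in>carrier G. in_cyc G x y \<or> in_cyc G y x")
  case True
  then show ?thesis
    using cyclic_if_in_cyc_total is_section_of_Q8_if_cyclic by blast
next
  case False
  then obtain a b where "a \<in> carrier G" "b \<in> carrier G" "\<not> in_cyc G a b" "\<not> in_cyc G b a"
    by blast
  then show ?thesis
    using is_section_of_Q8_if_Klein is_section_of_Q8_if_order_four by blast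
qed

end

theorem proposition2:
  shows "group Q8 \<and> sat_omega8 Q8 \<and> sat_exp4 Q8 \<and> sat_id3 Q8 \<and> sat_id4 Q8 \<and>
    (\<forall>G :: 'a monoid. group G \<and> sat_omega8 G \<and> sat_exp4 G \<and> sat_id3 G \<and> sat_id4 G
        \<longrightarrow> is_section_of G Q8)"
proof (intro conjI allI impI)
  fix G :: "'a monoid"
  assume "group G \<and> sat_omega8 G \<and> sat_exp4 G \<and> sat_id3 G \<and> sat_id4 G"
  then show "is_section_of G Q8"
    by (intro q8_identities.is_section_of_Q8) (simp add: q8_identities_def q8_identities_axioms_def)
qed (fact group_Q8 sat_omega8_Q8 sat_exp4_Q8 sat_id3_Q8 sat_id4_Q8)+

end
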